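(* Let $p,q$ be integers with $p\ge2$ and $0<q<p$. Let $g(x)=(1-p^2x)^{-q/p}$, $h(x)=(1-p^2x)^{-(p-q)/p}$, and $f(x)=\dfrac{-x}{1-p^2x}$. Then the dual Riordan array satisfies $R^*(g,f)=R(h,f)$.
   Context: For power series $g$ and $f$ with $f(0)=0$, the Riordan array $R(g,f)$ is the infinite matrix with entries $R(g,f)_{n,k}=[x^n]\bigl(g(x)f(x)^k\bigr)$ for $n,k\ge0$. If moreover $f'(0)\ne0$, the recursive matrix $D(g,f)$ is the doubly infinite matrix with entries $D(g,f)_{n,k}=[x^n]\bigl(g(x)f(x)^k\bigr)$ for all integers $n,k$, where for $k<0$, $f(x)^k$ is the multiplicative inverse of $f(x)^{-k}$ in the ring of formal Laurent series. The dual Riordan array $R^*(g,f)$ is the infinite matrix with entries $R^*(g,f)_{i,j}=D(g,f)_{-j,-i}$ for $i,j\ge0$ (the anti-transpose of the upper left quadrant of $D(g,f)$). *)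

theory Defs
  imports "HOL-Computational_Algebra.Formal_Laurent_Series"
begin

definition riordan :: "'a::field fps \<Rightarrow> 'a fps \<Rightarrow> nat \<Rightarrow> nat \<Rightarrow> 'a" where
  "riordan g f n k = fps_nth (g * f ^ k) n"

definition recmat :: "'a::field fps \<Rightarrow> 'a fps \<Rightarrow> int \<Rightarrow> int \<Rightarrow> 'a" where
  "recmat g f n k = fls_nth (fps_to_fls g * (fps_to_fls f) powi k) n"

definition dual_riordan :: "'a::field fps \<Rightarrow> 'a fps \<Rightarrow> nat \<Rightarrow> nat \<Rightarrow> 'a" where
  "dual_riordan g f i j = recmat g f (- int j) (- int i)"

text \<open>(1 + c x)^a as a formal power series, via the generalized binomial series.\<close>
definition binom_pow :: "real \<Rightarrow> real \<Rightarrow> real fps" where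
  "binom_pow c a = fps_compose (fps_binomial a) (fps_const c * fps_X)"

end

theory Submission
  imports Defs
begin

text \<open>Write \<open>B a = (1 + c x)^a\<close>, so that \<open>f = -x B(-1)\<close>, \<open>g = B(-a)\<close> and \<open>h = B(a - 1)\<close>
  with \<open>c = -p^2\<close> and \<open>a = q/p\<close>. Since \<open>a \<mapsto> B a\<close> is a homomorphism from addition to
  multiplication, also in the field of Laurent series, \<open>g f^k = (-1)^k x^k B(-a - k)\<close> for every
  integer \<open>k\<close>. Reading off coefficients, both \<open>R*(g,f)\<^sub>i\<^sub>j\<close> and \<open>R(h,f)\<^sub>i\<^sub>j\<close> vanish for \<open>i < j\<close>
  and otherwise equal \<open>c^(i-j)\<close> times \<open>(-1)^i ((i - a) choose (i - j))\<close> and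
  \<open>(-1)^j ((a - 1 - j) choose (i - j))\<close> respectively, which agree by upper negation of
  binomial coefficients. Nothing depends on the particular values of \<open>c\<close> and \<open>a\<close>.\<close>

lemma binom_pow_nth: "binom_pow c a $ n = c ^ n * (a gchoose n)"
  unfolding binom_pow_def fps_compose_linear by simp

lemma binom_pow_add: "binom_pow c (a + b) = binom_pow c a * binom_pow c b"
  unfolding binom_pow_def fps_binomial_add_mult
  by (rule fps_compose_mult_distrib) simp

lemma binom_pow_0 [simp]: "binom_pow c 0 = 1"
  by (simp add: binom_pow_def)

lemma binom_pow_1: "binom_pow c 1 = 1 + fps_const c * fps_X"
  by (simp add: binom_pow_def fps_binomial_1 fps_compose_add_distrib)

lemma binom_pow_of_nat_mult: "binom_pow c (of_nat n * a) = binom_pow c a ^ n"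
  by (induction n) (simp_all add: binom_pow_add algebra_simps)

lemma binom_pow_uminus_mult: "binom_pow c (- a) * binom_pow c a = 1"
  using binom_pow_add[of c "- a" a] by simp

lemma binom_pow_uminus_1: "binom_pow c (-1) = inverse (1 + fps_const c * fps_X)"
  using binom_pow_uminus_mult[of c 1]
  by (metis binom_pow_1 fps_inverse_unique mult.commute)

lemma fps_to_fls_binom_pow_power_int:
  "fps_to_fls (binom_pow c a) powi k = fps_to_fls (binom_pow c (of_int k * a))"
proof (cases "k \<ge> 0")
  case True
  then obtain n where "k = int n" by (metis nonneg_eq_int)
  thus ?thesis by (simp add: binom_pow_of_nat_mult fps_to_fls_power)
next
  case False
  define n where "n = nat (- k)"
  with False have k: "k = - int n" by simp
  have "fps_to_fls (binom_pow c a) ^ n * fps_to_fls (binom_pow c (- (of_nat n * a))) = 1"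
    by (metis binom_pow_of_nat_mult binom_pow_uminus_mult fls_times_fps_to_fls
        fps_one_to_fls fps_to_fls_power mult.commute)
  thus ?thesis
    by (simp add: k power_int_minus inverse_unique)
qed

lemma fps_to_fls_neg_X_binom_pow_power_int:
  "fps_to_fls (- (fps_X * binom_pow c (-1))) powi k
     = fls_const ((-1) powi k) * (fls_X_intpow k * fps_to_fls (binom_pow c (- of_int k)))"
proof -
  have "fps_to_fls (- (fps_X * binom_pow c (-1)))
          = fls_const (-1) * (fls_X * fps_to_fls (binom_pow c (-1)))"
    by (simp add: fls_times_fps_to_fls)
  thus ?thesis
    by (simp only: power_int_mult_distrib fls_const_power_int fls_X_power_int
        fps_to_fls_binom_pow_power_int mult_minus1_right)
qed

lemma recmat_binom_pow:
  "recmat (binom_pow c b) (- (fps_X * binom_pow c (-1))) n k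
     = (if n < k then 0 else (-1) powi k * c ^ nat (n - k) * ((b - of_int k) gchoose nat (n - k)))"
proof -
  have "fps_to_fls (binom_pow c b) * fps_to_fls (- (fps_X * binom_pow c (-1))) powi k
          = fls_const ((-1) powi k) * (fls_X_intpow k
              * fps_to_fls (binom_pow c b * binom_pow c (- of_int k)))"
    unfolding fps_to_fls_neg_X_binom_pow_power_int fls_times_fps_to_fls by (simp only: ac_simps)
  also have "\<dots> = fls_const ((-1) powi k) * fls_shift (- k) (fps_to_fls (binom_pow c (b - of_int k)))"
    by (simp add: fls_X_intpow_times_conv_shift binom_pow_add[symmetric])
  finally show ?thesis
    by (simp add: recmat_def binom_pow_nth)
qed

lemma riordan_eq_recmat: "riordan g f n k = recmat g f (int n) (int k)"
  by (simp add: riordan_def recmat_def fps_to_fls_power[symmetric] fls_times_fps_to_fls[symmetric])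

lemma dual_riordan_binom_pow_eq_riordan:
  fixes c a :: real
  defines "f \<equiv> - (fps_X * binom_pow c (-1))"
  shows "dual_riordan (binom_pow c (- a)) f i j = riordan (binom_pow c (a - 1)) f i j"
proof (cases "i < j")
  case True
  thus ?thesis by (simp add: f_def dual_riordan_def riordan_eq_recmat recmat_binom_pow)
next
  case False
  then obtain n where i: "i = j + n" using le_Suc_ex not_less by blast
  have "(a - 1 - of_nat j) gchoose n = (-1) ^ n * ((of_nat i - a) gchoose n)"
    by (subst gbinomial_negated_upper) (simp add: i algebra_simps)
  moreover have "(-1::real) powi (- int i) = (-1) ^ j * (-1) ^ n"
    unfolding power_int_minus power_int_of_nat by (simp add: i power_add flip: power_inverse)
  moreover have "(- a - (- of_nat j - of_nat n)) gchoose n = (of_nat i - a) gchoose n"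
    by (simp add: i algebra_simps)
  ultimately show ?thesis
    by (simp add: f_def dual_riordan_def riordan_eq_recmat recmat_binom_pow i)
qed

theorem theorem5:
  fixes p q :: int
  assumes "p \<ge> 2" and "0 < q" and "q < p"
  defines "g \<equiv> binom_pow (- (of_int p ^ 2)) (- (of_int q / of_int p))"
      and "h \<equiv> binom_pow (- (of_int p ^ 2)) (- (of_int (p - q) / of_int p))"
      and "f \<equiv> - fps_X * inverse (1 - fps_const (of_int p ^ 2) * fps_X)"
  shows "\<forall>i j. dual_riordan g f i j = riordan h f i j"
proof -
  define c :: real where "c = - (of_int p ^ 2)"
  define a :: real where "a = of_int q / of_int p"
  have "real_of_int p \<noteq> 0" using assms(1) by simp
  hence "- (of_int (p - q) / of_int p) = a - 1"
    by (simp add: a_def field_simps)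
  hence h: "h = binom_pow c (a - 1)" by (simp add: h_def c_def)
  have g: "g = binom_pow c (- a)" by (simp add: g_def c_def a_def)
  have f: "f = - (fps_X * binom_pow c (-1))"
    by (simp add: f_def c_def binom_pow_uminus_1 diff_conv_add_uminus flip: mult_minus_left)
  show ?thesis
    unfolding g h f by (simp only: dual_riordan_binom_pow_eq_riordan simp_thms)
qed

end
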